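(* Fix $n\ge1$. For $r\ge1$ and $0\le k\le n$, \[ \dim\mathcal{J}_r\Lambda^k(\mathbb{R}^n)=\sum_{i=0}^k(-1)^i(A_i-B_i), \] where \[ A_i:=\sum_{d=k-i}^{\min\{n,\lfloor (r+i)/2\rfloor+k-i\}}2^{n-d}\binom{n}{d}\binom{r-d+2k-i}{d}\binom{d}{k-i},\qquad B_i:=\sum_{j=0}^{r+i}\binom{n+j-1}{j}\binom{n}{k-i}. \]
   Context: Fix $n\ge1$. For a multi-index $\alpha\in\mathbb{N}^n$ and a subset $\sigma=\{\sigma(1)<\dots<\sigma(k)\}\subset\{1,\dots,n\}$, the form monomial is $x^\alpha dx_\sigma:=x_1^{\alpha_1}\cdots x_n^{\alpha_n}\,dx_{\sigma(1)}\wedge\cdots\wedge dx_{\sigma(k)}$, of degree $|\alpha|$. $\mathcal{H}_r\Lambda^k(\mathbb{R}^n)$ is the span of form monomials with $|\alpha|=r$, $|\sigma|=k$. The Koszul operator $\kappa$ is defined on monomials by $\kappa(x^\alpha dx_\sigma)=\sum_{i=1}^k(-1)^{i+1}x^\alpha x_{\sigma(i)}\,dx_{\sigma(1)}\wedge\cdots\wedge\widehat{dx_{\sigma(i)}}\wedge\cdots\wedge dx_{\sigma(k)}$ and extended linearly. The linear degree is $\mathrm{ldeg}(x^\alpha dx_\sigma):=\#\{i\notin\sigma:\alpha_i=1\}$, and $\mathcal{H}_{r,l}\Lambda^k$ is the span of form monomials in $\mathcal{H}_r\Lambda^k$ with linear degree $\ge l$. Define $\mathcal{J}_r\Lambda^k(\mathbb{R}^n):=\sum_{l\ge1}\kappa\,\mathcal{H}_{r+l-1,l}\Lambda^{k+1}(\mathbb{R}^n)$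 ($=0$ for $k=n$). Dimensions are over $\mathbb{R}$. *)

theory Defs
  imports "HOL-Analysis.Analysis" "HOL-Library.Function_Algebras"
begin

text \<open>Polynomial differential forms on R^n are represented by their coefficient
functions on form monomials x^alpha dx_sigma, where alpha is a list of length n
(exponents of x_1..x_n, indices 0..n-1) and sigma is a subset of {0..<n}.\<close>

type_synonym form = "(nat list \<times> nat set) \<Rightarrow> real"

definition fscale :: "real \<Rightarrow> form \<Rightarrow> form" where
  "fscale c f = (\<lambda>p. c * f p)"

definition fmon :: "nat list \<Rightarrow> nat set \<Rightarrow> form" where
  "fmon a s = (\<lambda>p. if p = (a, s) then 1 else 0)"

definition mon_idx :: "nat \<Rightarrow> nat \<Rightarrow> nat \<Rightarrow> (nat list \<times> nat set) set" where
  "mon_idx n r k = {(a, s). length a = n \<and> sum_list a = r \<and> s \<subseteq> {..<n} \<and> card s = k}"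

definition ldeg :: "nat \<Rightarrow> nat list \<Rightarrow> nat set \<Rightarrow> nat" where
  "ldeg n a s = card {i. i < n \<and> i \<notin> s \<and> a ! i = 1}"

definition Hrl :: "nat \<Rightarrow> nat \<Rightarrow> nat \<Rightarrow> nat \<Rightarrow> form set" where
  "Hrl n r l k = module.span fscale
     ((\<lambda>(a, s). fmon a s) ` {(a, s) \<in> mon_idx n r k. ldeg n a s \<ge> l})"

text \<open>Koszul operator on a monomial: the i-th element (1-based) of sigma gets sign
(-1)^(i+1), i.e. (-1)^(number of elements of sigma smaller than it).\<close>
definition kappa_mon :: "nat list \<Rightarrow> nat set \<Rightarrow> form" where
  "kappa_mon a s = (\<Sum>i\<in>s. fscale ((-1) ^ card {j\<in>s. j < i})
       (fmon (a[i := a ! i + 1]) (s - {i})))"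

text \<open>Linear extension (for finitely supported forms).\<close>
definition kappa :: "form \<Rightarrow> form" where
  "kappa f = (\<Sum>p\<in>{p. f p \<noteq> 0}. fscale (f p) (kappa_mon (fst p) (snd p)))"

text \<open>J_r Lambda^k(R^n) = sum over l >= 1 of kappa H_{r+l-1,l} Lambda^{k+1}; the sum of
subspaces is the span of their union.\<close>
definition Jspace :: "nat \<Rightarrow> nat \<Rightarrow> nat \<Rightarrow> form set" where
  "Jspace n r k = module.span fscale
     (\<Union>l\<in>{1..}. kappa ` Hrl n (r + l - 1) l (k + 1))"

definition Aterm :: "nat \<Rightarrow> nat \<Rightarrow> nat \<Rightarrow> nat \<Rightarrow> nat" where
  "Aterm n r k i = (\<Sum>d = k - i..min n ((r + i) div 2 + k - i).
      2 ^ (n - d) * (n choose d) * ((r + 2 * k - i - d) choose d) * (d choose (k - i)))"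

definition Bterm :: "nat \<Rightarrow> nat \<Rightarrow> nat \<Rightarrow> nat \<Rightarrow> nat" where
  "Bterm n r k i = (\<Sum>j = 0..r + i. ((n + j - 1) choose j) * (n choose (k - i)))"

end

theory Submission
  imports Defs
begin

text \<open>
Write a monomial \<open>x\<^sup>a dx\<^sub>s\<close> through its total exponent \<open>b = a + \<one>\<^sub>s\<close>. Then \<open>\<kappa>\<close> of it has total
exponent \<open>b\<close> and degree \<open>k\<close>, and the condition \<open>ldeg \<ge> l\<close> in the definition of \<open>J\<^sub>r\<Lambda>\<^sup>k\<close> becomes a
bound \<open>weight b s \<le> r + k\<close>, where entries \<open>\<ge> 2\<close> of \<open>b\<close> count fully and entries \<open>1\<close> only inside \<open>s\<close>.
So \<open>J\<^sub>r\<Lambda>\<^sup>k\<close> is spanned by the \<open>\<kappa>(x\<^sup>b\<^sup>-\<^sup>\<one>\<^sup>s dx\<^sub>s)\<close> with \<open>|s| = k + 1\<close>, \<open>|b| > r + k\<close>,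
\<open>weight b s \<le> r + k\<close>. Fixing for each \<open>b\<close> a pivot index \<open>v\<close>, the relation \<open>\<kappa>\<kappa> = 0\<close> expresses the
generators with \<open>v \<notin> s\<close> through those with \<open>v \<in> s\<close>, and the latter are independent since each
has a monomial of its own. Hence the dimension is a number \<open>I(r, k)\<close> of index pairs; splitting
by whether \<open>v \<in> s\<close> gives \<open>I(r, k) + I(r + 1, k - 1) = A\<^sub>0 - B\<^sub>0\<close>, where \<open>A\<^sub>0\<close> counts pairs of
weight \<open>\<le> r + k\<close> (by a recursion on \<open>n\<close>) and \<open>B\<^sub>0\<close> those of degree \<open>\<le> r + k\<close>. Unrolling this
recursion in \<open>k\<close> gives the alternating sum.
\<close>

section \<open>The Koszul operator on finitely supported forms\<close>

interpretation forms: vector_space fscale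
  by unfold_locales (auto simp: fscale_def fun_eq_iff algebra_simps)

definition finsupp :: "form \<Rightarrow> bool" where
  "finsupp f \<longleftrightarrow> finite {p. f p \<noteq> 0}"

lemma finsupp_0 [simp]: "finsupp 0"
  by (simp add: finsupp_def)

lemma finsupp_fmon [simp]: "finsupp (fmon a s)"
  by (simp add: finsupp_def fmon_def)

lemma finsupp_add: "finsupp f \<Longrightarrow> finsupp g \<Longrightarrow> finsupp (f + g)"
  unfolding finsupp_def
  by (rule finite_subset[of _ "{p. f p \<noteq> 0} \<union> {p. g p \<noteq> 0}"]) auto

lemma finsupp_fscale: "finsupp f \<Longrightarrow> finsupp (fscale c f)"
  unfolding finsupp_def fscale_def by (rule finite_subset[of _ "{p. f p \<noteq> 0}"]) auto

lemma finsupp_sum: "(\<And>x. x \<in> A \<Longrightarrow> finsupp (g x)) \<Longrightarrow> finsupp (\<Sum>x\<in>A. g x)"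
  by (induction A rule: infinite_finite_induct) (auto intro: finsupp_add)

lemma sum_form_apply: "(\<Sum>x\<in>A. (f x :: form)) p = (\<Sum>x\<in>A. f x p)"
  by (induction A rule: infinite_finite_induct) auto

lemma fscale_neg: "fscale (- c) f = - fscale c f"
  by (simp add: fscale_def fun_eq_iff)

lemma kappa_eq_sum:
  assumes "finite F" and "{p. f p \<noteq> 0} \<subseteq> F"
  shows "kappa f = (\<Sum>p\<in>F. fscale (f p) (kappa_mon (fst p) (snd p)))"
  unfolding kappa_def
  by (rule sum.mono_neutral_left) (use assms in \<open>auto simp: fscale_def fun_eq_iff\<close>)

lemma kappa_0 [simp]: "kappa 0 = 0"
  by (simp add: kappa_def)

lemma kappa_add:
  assumes "finsupp f" and "finsupp g"
  shows "kappa (f + g) = kappa f + kappa g"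
proof -
  let ?F = "{p. f p \<noteq> 0} \<union> {p. g p \<noteq> 0}"
  have fin: "finite ?F"
    using assms by (simp add: finsupp_def)
  have "kappa (f + g) = (\<Sum>p\<in>?F. fscale ((f + g) p) (kappa_mon (fst p) (snd p)))"
    by (rule kappa_eq_sum[OF fin]) auto
  also have "\<dots> = kappa f + kappa g"
    by (simp add: kappa_eq_sum[OF fin] forms.scale_left_distrib sum.distrib)
  finally show ?thesis .
qed

lemma kappa_fscale:
  assumes "finsupp f"
  shows "kappa (fscale c f) = fscale c (kappa f)"
proof -
  let ?F = "{p. f p \<noteq> 0}"
  have fin: "finite ?F"
    using assms by (simp add: finsupp_def)
  have "kappa (fscale c f) = (\<Sum>p\<in>?F. fscale (fscale c f p) (kappa_mon (fst p) (snd p)))"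
    by (rule kappa_eq_sum[OF fin]) (auto simp: fscale_def)
  also have "\<dots> = fscale c (kappa f)"
    by (simp add: kappa_eq_sum[OF fin] forms.scale_sum_right fscale_def[of c f])
  finally show ?thesis .
qed

lemma kappa_sum:
  "finite A \<Longrightarrow> (\<And>x. x \<in> A \<Longrightarrow> finsupp (g x)) \<Longrightarrow> kappa (\<Sum>x\<in>A. g x) = (\<Sum>x\<in>A. kappa (g x))"
  by (induction A rule: finite_induct) (auto simp: kappa_add finsupp_sum)

lemma kappa_fmon [simp]: "kappa (fmon a s) = kappa_mon a s"
proof -
  have "kappa (fmon a s) = (\<Sum>p\<in>{(a, s)}. fscale (fmon a s p) (kappa_mon (fst p) (snd p)))"
    by (rule kappa_eq_sum) (auto simp: fmon_def)
  then show ?thesis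
    by (simp add: fmon_def fscale_def)
qed

lemma kappa_span_subset:
  assumes "M \<subseteq> range (\<lambda>(a, s). fmon a s)"
  shows "kappa ` forms.span M \<subseteq> forms.span (kappa ` M)"
proof -
  have "finsupp x \<and> kappa x \<in> forms.span (kappa ` M)" if "x \<in> forms.span M" for x
    using that
  proof (induction rule: forms.span_induct_alt)
    case base
    show ?case
      by (metis finsupp_0 kappa_0 forms.span_zero)
  next
    case (step c x y)
    have fx: "finsupp x"
      using step(1) assms by auto
    then have "kappa (fscale c x + y) = fscale c (kappa x) + kappa y"
      using step(2) by (simp add: kappa_add finsupp_fscale kappa_fscale)
    then show ?case
      using step fx by (metis finsupp_add finsupp_fscale forms.span_add forms.span_scale
          forms.span_base imageI)
  qed
  then show ?thesis
    by blast
qed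


definition koszul_sign :: "nat set \<Rightarrow> nat \<Rightarrow> real" where
  "koszul_sign s i = (-1) ^ card {j\<in>s. j < i}"

definition bump :: "nat list \<Rightarrow> nat \<Rightarrow> nat list" where
  "bump a i = a[i := a ! i + 1]"

lemma kappa_mon_eq:
  "kappa_mon a s = (\<Sum>i\<in>s. fscale (koszul_sign s i) (fmon (bump a i) (s - {i})))"
  by (simp add: kappa_mon_def koszul_sign_def bump_def)

lemma koszul_sign_square: "koszul_sign s i * koszul_sign s i = 1"
  by (simp add: koszul_sign_def power_mult_distrib[symmetric])

lemma bump_commute: "i \<noteq> j \<Longrightarrow> bump (bump a i) j = bump (bump a j) i"
  unfolding bump_def
  by (cases "i < length a"; cases "j < length a") (auto simp: list_update_swap nth_list_update)

lemma koszul_sign_swap_less: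
  assumes "finite s" "i \<in> s" "j \<in> s" "i < j"
  shows "koszul_sign s i * koszul_sign (s - {i}) j = - (koszul_sign s j * koszul_sign (s - {j}) i)"
proof -
  have below_i: "{x\<in>s - {j}. x < i} = {x\<in>s. x < i}"
    using assms by auto
  have below_j: "{x\<in>s - {i}. x < j} = {x\<in>s. x < j} - {i}"
    using assms by auto
  have "card {x\<in>s. x < j} \<noteq> 0"
    using assms by auto
  then obtain m where m: "card {x\<in>s. x < j} = Suc m"
    using not0_implies_Suc by blast
  have "card ({x\<in>s. x < j} - {i}) = m"
    using assms m by (simp add: card_Diff_singleton)
  then show ?thesis
    unfolding koszul_sign_def below_i below_j m by simp
qed

lemma koszul_sign_swap:
  assumes "finite s" "i \<in> s" "j \<in> s" "i \<noteq> j"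
  shows "koszul_sign s i * koszul_sign (s - {i}) j = - (koszul_sign s j * koszul_sign (s - {j}) i)"
proof (cases "i < j")
  case False
  then have "j < i"
    using assms by simp
  then show ?thesis
    using koszul_sign_swap_less[of s j i] assms by simp
qed (use koszul_sign_swap_less assms in blast)

lemma kappa_kappa_mon: "kappa (kappa_mon a s) = 0"
proof (cases "finite s")
  case False
  then show ?thesis
    by (simp add: kappa_mon_def)
next
  case fin: True
  define G where "G i j = (if i = j then 0 else
      fscale (koszul_sign s i * koszul_sign (s - {i}) j) (fmon (bump (bump a i) j) (s - {i} - {j})))"
    for i j
  have antisym: "G i j = - G j i" if "i \<in> s" "j \<in> s" for i j
  proof (cases "i = j")
    case False
    have "s - {i} - {j} = s - {j} - {i}"
      by auto
    then show ?thesis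
      using False koszul_sign_swap[OF fin that False] bump_commute[OF False, of a]
      by (simp add: G_def fscale_neg)
  qed (simp add: G_def)
  have inner: "fscale (koszul_sign s i) (kappa_mon (bump a i) (s - {i})) = (\<Sum>j\<in>s. G i j)"
    if "i \<in> s" for i
  proof -
    have "fscale (koszul_sign s i) (kappa_mon (bump a i) (s - {i})) = (\<Sum>j\<in>s - {i}. G i j)"
      unfolding kappa_mon_eq[of "bump a i"] forms.scale_sum_right
      by (rule sum.cong) (auto simp: G_def)
    also have "\<dots> = (\<Sum>j\<in>s. G i j)"
      by (rule sum.mono_neutral_left) (use fin in \<open>auto simp: G_def\<close>)
    finally show ?thesis .
  qed
  have "kappa (kappa_mon a s) = (\<Sum>i\<in>s. fscale (koszul_sign s i) (kappa_mon (bump a i) (s - {i})))"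
    unfolding kappa_mon_eq[of a s]
    by (simp add: kappa_sum[OF fin] finsupp_fscale kappa_fscale)
  also have "\<dots> = (\<Sum>i\<in>s. \<Sum>j\<in>s. G i j)"
    by (intro sum.cong refl inner)
  also have "\<dots> = 0"
  proof -
    have "(\<Sum>i\<in>s. \<Sum>j\<in>s. G i j) = (\<Sum>j\<in>s. \<Sum>i\<in>s. - G j i)"
      unfolding sum.swap[of G s s] by (intro sum.cong refl antisym)
    also have "\<dots> = - (\<Sum>i\<in>s. \<Sum>j\<in>s. G i j)"
      by (simp add: sum_negf)
    finally show ?thesis
      by (simp add: fun_eq_iff)
  qed
  finally show ?thesis .
qed

section \<open>Total exponents, weight and pivot\<close>

definition add_ind :: "nat list \<Rightarrow> nat set \<Rightarrow> nat list" where
  "add_ind a s = map (\<lambda>i. a ! i + of_bool (i \<in> s)) [0..<length a]"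

definition sub_ind :: "nat list \<Rightarrow> nat set \<Rightarrow> nat list" where
  "sub_ind b s = map (\<lambda>i. b ! i - of_bool (i \<in> s)) [0..<length b]"

definition nonzeros :: "nat list \<Rightarrow> nat set" where
  "nonzeros b = {i. i < length b \<and> b ! i \<noteq> 0}"

definition entry_weight :: "nat \<Rightarrow> bool \<Rightarrow> nat" where
  "entry_weight e marked = (if 2 \<le> e then e else of_bool marked)"

definition weight :: "nat list \<Rightarrow> nat set \<Rightarrow> nat" where
  "weight b s = (\<Sum>i<length b. entry_weight (b ! i) (i \<in> s))"

lemma length_add_ind [simp]: "length (add_ind a s) = length a"
  by (simp add: add_ind_def)

lemma length_sub_ind [simp]: "length (sub_ind b s) = length b"
  by (simp add: sub_ind_def)

lemma nth_add_ind [simp]: "i < length a \<Longrightarrow> add_ind a s ! i = a ! i + of_bool (i \<in> s)"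
  by (simp add: add_ind_def)

lemma nth_sub_ind [simp]: "i < length b \<Longrightarrow> sub_ind b s ! i = b ! i - of_bool (i \<in> s)"
  by (simp add: sub_ind_def)

lemma nonzeros_subset: "nonzeros b \<subseteq> {..<length b}"
  by (auto simp: nonzeros_def)

lemma finite_nonzeros [simp]: "finite (nonzeros b)"
  by (rule finite_subset[OF nonzeros_subset]) simp

lemma finite_if_subset_nonzeros: "s \<subseteq> nonzeros b \<Longrightarrow> finite s"
  by (rule finite_subset[OF _ finite_nonzeros])

lemma add_ind_sub_ind: "s \<subseteq> nonzeros b \<Longrightarrow> add_ind (sub_ind b s) s = b"
  by (rule nth_equalityI) (auto simp: nonzeros_def)

lemma sub_ind_add_ind: "sub_ind (add_ind a s) s = a"
  by (rule nth_equalityI) auto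

lemma subset_nonzeros_add_ind: "s \<subseteq> {..<length a} \<Longrightarrow> s \<subseteq> nonzeros (add_ind a s)"
  by (auto simp: nonzeros_def)

lemma sum_list_nth: "sum_list (b :: nat list) = (\<Sum>i<length b. b ! i)"
  by (simp add: sum_list_sum_nth atLeast0LessThan)

lemma card_eq_sum_of_bool:
  fixes n :: nat
  assumes "s \<subseteq> {..<n}"
  shows "card s = (\<Sum>i<n. of_bool (i \<in> s))"
proof -
  have "{..<n} \<inter> {i. i \<in> s} = s"
    using assms by blast
  then show ?thesis
    by simp
qed

lemma sum_list_sub_ind:
  assumes "s \<subseteq> nonzeros b"
  shows "sum_list (sub_ind b s) + card s = sum_list b"
proof -
  have "card s = (\<Sum>i<length b. of_bool (i \<in> s))"
    using assms nonzeros_subset by (blast intro: card_eq_sum_of_bool)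
  then have "sum_list (sub_ind b s) + card s = (\<Sum>i<length b. b ! i - of_bool (i \<in> s) + of_bool (i \<in> s))"
    by (simp add: sum_list_nth sum.distrib)
  also have "\<dots> = sum_list b"
    unfolding sum_list_nth by (rule sum.cong) (use assms in \<open>auto simp: nonzeros_def\<close>)
  finally show ?thesis .
qed

lemma sum_list_eq_weight_plus_ldeg:
  assumes "s \<subseteq> nonzeros b"
  shows "sum_list b = weight b s + ldeg (length b) (sub_ind b s) s"
proof -
  have "{i. i < length b \<and> i \<notin> s \<and> sub_ind b s ! i = 1} = {..<length b} \<inter> {i. i \<notin> s \<and> b ! i = 1}"
    by auto
  then have "ldeg (length b) (sub_ind b s) s = (\<Sum>i<length b. of_bool (i \<notin> s \<and> b ! i = 1))"
    by (simp add: ldeg_def)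
  then have "weight b s + ldeg (length b) (sub_ind b s) s
      = (\<Sum>i<length b. entry_weight (b ! i) (i \<in> s) + of_bool (i \<notin> s \<and> b ! i = 1))"
    by (simp add: weight_def sum.distrib)
  also have "\<dots> = sum_list b"
    unfolding sum_list_nth
    by (rule sum.cong) (use assms in \<open>auto simp: entry_weight_def nonzeros_def\<close>)
  finally show ?thesis ..
qed

lemma weight_mono: "s \<subseteq> t \<Longrightarrow> weight b s \<le> weight b t"
  unfolding weight_def by (rule sum_mono) (auto simp: entry_weight_def)

lemma weight_insert_large: "2 \<le> b ! v \<Longrightarrow> weight b (insert v s) = weight b (s - {v})"
  unfolding weight_def by (rule sum.cong) (auto simp: entry_weight_def)

lemma weight_eq_card_if_entries_le_1:
  assumes "\<forall>i<length b. b ! i \<le> 1" and "s \<subseteq> nonzeros b"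
  shows "weight b s = card s"
proof -
  have "weight b s = (\<Sum>i<length b. of_bool (i \<in> s))"
    unfolding weight_def
    by (rule sum.cong) (use assms in \<open>auto simp: entry_weight_def nonzeros_def\<close>)
  then show ?thesis
    using assms(2) nonzeros_subset by (metis card_eq_sum_of_bool subset_trans)
qed

lemma entry_le_weight: "i < length b \<Longrightarrow> b ! i \<le> Suc (weight b s)"
proof (cases "2 \<le> b ! i")
  case True
  assume "i < length b"
  then have "entry_weight (b ! i) (i \<in> s) \<le> weight b s"
    unfolding weight_def by (intro member_le_sum) auto
  then show ?thesis
    using True by (simp add: entry_weight_def)
qed simp

lemma finite_weight_le: "finite {(b, s). length b = n \<and> s \<subseteq> nonzeros b \<and> weight b s \<le> N}"
proof (rule finite_subset)
  show "{(b, s). length b = n \<and> s \<subseteq> nonzeros b \<and> weight b s \<le> N}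
      \<subseteq> {b. set b \<subseteq> {..Suc N} \<and> length b = n} \<times> Pow {..<n}"
  proof
    fix p assume "p \<in> {(b, s). length b = n \<and> s \<subseteq> nonzeros b \<and> weight b s \<le> N}"
    then obtain b s where p: "p = (b, s)" "length b = n" "s \<subseteq> nonzeros b" "weight b s \<le> N"
      by auto
    have "set b \<subseteq> {..Suc N}"
    proof
      fix e assume "e \<in> set b"
      then obtain i where "i < length b" "e = b ! i"
        by (auto simp: in_set_conv_nth)
      then show "e \<in> {..Suc N}"
        using entry_le_weight[of i b s] p(4) by simp
    qed
    then show "p \<in> {b. set b \<subseteq> {..Suc N} \<and> length b = n} \<times> Pow {..<n}"
      using p nonzeros_subset by auto
  qed
  show "finite ({b. set b \<subseteq> {..Suc N} \<and> length b = n} \<times> Pow {..<n})"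
    by (intro finite_cartesian_product finite_lists_length_eq) auto
qed

text \<open>Inserting the pivot into \<open>s\<close> never breaks a bound \<open>weight b s \<le> r + |s|\<close> with \<open>r \<ge> 1\<close>:
either its entry is \<open>\<ge> 2\<close> and already counted, or all entries are \<open>\<le> 1\<close> and the weight is \<open>|s|\<close>.\<close>

definition pivot :: "nat list \<Rightarrow> nat" where
  "pivot b = (if \<exists>i<length b. 2 \<le> b ! i then LEAST i. i < length b \<and> 2 \<le> b ! i
              else LEAST i. i < length b \<and> 1 \<le> b ! i)"

lemma pivot_in_nonzeros:
  assumes "sum_list b \<noteq> 0"
  shows "pivot b \<in> nonzeros b"
proof -
  have "\<exists>i<length b. 1 \<le> b ! i"
    using assms by (auto simp: sum_list_nth)
  then have "pivot b < length b \<and> 1 \<le> b ! pivot b"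
  proof (cases "\<exists>i<length b. 2 \<le> b ! i")
    case True
    then show ?thesis
      unfolding pivot_def using LeastI_ex[of "\<lambda>i. i < length b \<and> 2 \<le> b ! i"] by auto
  next
    case False
    then show ?thesis
      unfolding pivot_def using LeastI_ex[of "\<lambda>i. i < length b \<and> 1 \<le> b ! i"] \<open>\<exists>i<length b. 1 \<le> b ! i\<close>
      by auto
  qed
  then show ?thesis
    by (simp add: nonzeros_def)
qed

lemma entries_le_1_if_pivot_small:
  assumes "b ! pivot b < 2"
  shows "\<forall>i<length b. b ! i \<le> 1"
proof (rule ccontr)
  assume "\<not> ?thesis"
  then have ex: "\<exists>i<length b. 2 \<le> b ! i"
    by auto
  then have "2 \<le> b ! pivot b"
    unfolding pivot_def using LeastI_ex[of "\<lambda>i. i < length b \<and> 2 \<le> b ! i"] by auto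
  then show False
    using assms by simp
qed

lemma weight_insert_pivot:
  assumes "sum_list b \<noteq> 0" "s \<subseteq> nonzeros b" "pivot b \<notin> s" "1 \<le> r"
  shows "weight b (insert (pivot b) s) \<le> r + card s \<longleftrightarrow> weight b s \<le> r + card s"
proof (cases "2 \<le> b ! pivot b")
  case True
  moreover have "s - {pivot b} = s"
    using assms(3) by blast
  ultimately have "weight b (insert (pivot b) s) = weight b s"
    using weight_insert_large by metis
  then show ?thesis
    by simp
next
  case False
  then have small: "\<forall>i<length b. b ! i \<le> 1"
    by (intro entries_le_1_if_pivot_small) simp
  have "weight b (insert (pivot b) s) = card (insert (pivot b) s)"
    using pivot_in_nonzeros[OF assms(1)] assms(2) by (intro weight_eq_card_if_entries_le_1[OF small]) auto
  moreover have "card (insert (pivot b) s) = Suc (card s)"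
    using assms(2,3) finite_if_subset_nonzeros by simp
  ultimately show ?thesis
    using weight_eq_card_if_entries_le_1[OF small assms(2)] assms(4) by simp
qed

section \<open>A basis of \<open>J\<^sub>r\<Lambda>\<^sup>k\<close>\<close>

definition kgen :: "nat list \<Rightarrow> nat set \<Rightarrow> form" where
  "kgen b s = kappa_mon (sub_ind b s) s"

definition kgen_idx :: "nat \<Rightarrow> nat \<Rightarrow> nat \<Rightarrow> (nat list \<times> nat set) set" where
  "kgen_idx n r k = {(b, s). length b = n \<and> s \<subseteq> nonzeros b \<and> card s = Suc k \<and>
      r + k < sum_list b \<and> weight b s \<le> r + k}"

definition kbasis :: "nat list \<Rightarrow> nat set \<Rightarrow> form" where
  "kbasis b t = kgen b (insert (pivot b) t)"

definition kbasis_idx :: "nat \<Rightarrow> nat \<Rightarrow> nat \<Rightarrow> (nat list \<times> nat set) set" where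
  "kbasis_idx n r k = {(b, t). length b = n \<and> t \<subseteq> nonzeros b - {pivot b} \<and> card t = k \<and>
      r + k < sum_list b \<and> weight b (insert (pivot b) t) \<le> r + k}"

lemma mon_idx_imp_kgen_idx:
  assumes "(a, s) \<in> mon_idx n (r + l - 1) (Suc k)" "l \<le> ldeg n a s" "1 \<le> l"
  shows "(add_ind a s, s) \<in> kgen_idx n r k"
proof -
  let ?b = "add_ind a s"
  have a: "length a = n" "sum_list a = r + l - 1" "s \<subseteq> {..<n}" "card s = Suc k"
    using assms(1) by (auto simp: mon_idx_def)
  then have s: "s \<subseteq> nonzeros ?b"
    by (simp add: subset_nonzeros_add_ind)
  have "sum_list ?b = r + l + k"
    using sum_list_sub_ind[OF s] a assms(3) by (simp add: sub_ind_add_ind)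
  moreover have "weight ?b s + l \<le> sum_list ?b"
    using sum_list_eq_weight_plus_ldeg[OF s] assms(2) a by (simp add: sub_ind_add_ind)
  ultimately show ?thesis
    using a s assms(3) by (simp add: kgen_idx_def)
qed

lemma kgen_idx_imp_mon_idx:
  assumes "(b, s) \<in> kgen_idx n r k"
  defines "l \<equiv> sum_list b - (r + k)"
  shows "1 \<le> l" "(sub_ind b s, s) \<in> mon_idx n (r + l - 1) (Suc k)" "l \<le> ldeg n (sub_ind b s) s"
proof -
  have b: "length b = n" "s \<subseteq> nonzeros b" "card s = Suc k" "r + k < sum_list b" "weight b s \<le> r + k"
    using assms(1) by (auto simp: kgen_idx_def)
  show "1 \<le> l"
    using b(4) by (simp add: l_def)
  show "(sub_ind b s, s) \<in> mon_idx n (r + l - 1) (Suc k)"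
    using sum_list_sub_ind[OF b(2)] b nonzeros_subset[of b] by (auto simp: mon_idx_def l_def)
  show "l \<le> ldeg n (sub_ind b s) s"
    using sum_list_eq_weight_plus_ldeg[OF b(2)] b by (simp add: l_def)
qed

lemma Jspace_eq_span_kgen: "Jspace n r k = forms.span (case_prod kgen ` kgen_idx n r k)"
proof
  show "Jspace n r k \<subseteq> forms.span (case_prod kgen ` kgen_idx n r k)"
    unfolding Jspace_def Hrl_def
  proof (intro forms.span_minimal[OF _ forms.subspace_span] UN_least)
    fix l :: nat
    assume "l \<in> {1..}"
    let ?M = "(\<lambda>(a, s). fmon a s) ` {(a, s) \<in> mon_idx n (r + l - 1) (k + 1). l \<le> ldeg n a s}"
    have "kappa ` ?M \<subseteq> case_prod kgen ` kgen_idx n r k"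
    proof clarify
      fix a s assume "(a, s) \<in> mon_idx n (r + l - 1) (k + 1)" "l \<le> ldeg n a s"
      then have "(add_ind a s, s) \<in> kgen_idx n r k"
        using \<open>l \<in> {1..}\<close> by (intro mon_idx_imp_kgen_idx) auto
      then show "kappa (fmon a s) \<in> case_prod kgen ` kgen_idx n r k"
        by (force simp: kgen_def sub_ind_add_ind)
    qed
    then show "kappa ` forms.span ?M \<subseteq> forms.span (case_prod kgen ` kgen_idx n r k)"
      using kappa_span_subset[of ?M] forms.span_mono by blast
  qed
  show "forms.span (case_prod kgen ` kgen_idx n r k) \<subseteq> Jspace n r k"
    unfolding Jspace_def Hrl_def
  proof (rule forms.span_mono, clarify)
    fix b s assume bs: "(b, s) \<in> kgen_idx n r k"
    define l where "l = sum_list b - (r + k)"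
    note mon = kgen_idx_imp_mon_idx[OF bs, folded l_def]
    have "fmon (sub_ind b s) s \<in> forms.span ((\<lambda>(a, s). fmon a s) `
        {(a, s) \<in> mon_idx n (r + l - 1) (k + 1). l \<le> ldeg n a s})"
      using mon by (intro forms.span_base) force
    then show "kgen b s \<in> (\<Union>l\<in>{1..}. kappa ` forms.span ((\<lambda>(a, s). fmon a s) `
        {(a, s) \<in> mon_idx n (r + l - 1) (k + 1). l \<le> ldeg n a s}))"
      using mon(1) by (force simp: kgen_def)
  qed
qed

lemma bump_sub_ind: "s \<subseteq> nonzeros b \<Longrightarrow> i \<in> s \<Longrightarrow> bump (sub_ind b s) i = sub_ind b (s - {i})"
  unfolding bump_def by (rule nth_equalityI) (auto simp: nth_list_update nonzeros_def)

lemma kgen_eq_sum: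
  assumes "s \<subseteq> nonzeros b"
  shows "kgen b s = (\<Sum>i\<in>s. fscale (koszul_sign s i) (fmon (sub_ind b (s - {i})) (s - {i})))"
  unfolding kgen_def kappa_mon_eq using assms by (intro sum.cong) (simp_all add: bump_sub_ind)

lemma kgen_relation:
  assumes "s \<subseteq> nonzeros b"
  shows "(\<Sum>i\<in>s. fscale (koszul_sign s i) (kgen b (s - {i}))) = 0"
proof -
  have "0 = kappa (kgen b s)"
    by (simp add: kgen_def kappa_kappa_mon)
  also have "\<dots> = (\<Sum>i\<in>s. kappa (fscale (koszul_sign s i) (fmon (sub_ind b (s - {i})) (s - {i}))))"
    unfolding kgen_eq_sum[OF assms]
    using finite_if_subset_nonzeros[OF assms] by (intro kappa_sum) (auto intro: finsupp_fscale)
  also have "\<dots> = (\<Sum>i\<in>s. fscale (koszul_sign s i) (kgen b (s - {i})))"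
    by (simp add: kappa_fscale kgen_def)
  finally show ?thesis ..
qed

lemma kgen_in_span_kbasis:
  assumes "1 \<le> r" and bs: "(b, s) \<in> kgen_idx n r k"
  shows "kgen b s \<in> forms.span (case_prod kbasis ` kbasis_idx n r k)"
proof -
  let ?v = "pivot b"
  have b: "length b = n" "s \<subseteq> nonzeros b" "card s = Suc k" "r + k < sum_list b" "weight b s \<le> r + k"
    using bs by (auto simp: kgen_idx_def)
  have sum_b: "sum_list b \<noteq> 0"
    using b(4) by linarith
  then have v: "?v \<in> nonzeros b"
    by (rule pivot_in_nonzeros)
  have fin: "finite s"
    using b(2) by (rule finite_if_subset_nonzeros)
  show ?thesis
  proof (cases "?v \<in> s")
    case True
    then have "(b, s - {?v}) \<in> kbasis_idx n r k" "kbasis b (s - {?v}) = kgen b s"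
      using b fin by (auto simp: kbasis_idx_def kbasis_def insert_absorb)
    then show ?thesis
      by (metis (no_types, lifting) case_prod_conv forms.span_base image_eqI)
  next
    case False
    let ?s = "insert ?v s"
    have in_basis: "(b, s - {i}) \<in> kbasis_idx n r k" if "i \<in> s" for i
    proof -
      have "card (s - {i}) = k" "weight b (s - {i}) \<le> r + k"
        using b that weight_mono[of "s - {i}" s b] by (auto simp: fin)
      moreover have "s - {i} \<subseteq> nonzeros b" "?v \<notin> s - {i}"
        using b False by auto
      note weight_insert_pivot[OF sum_b this assms(1)]
      ultimately have "weight b (insert ?v (s - {i})) \<le> r + card (s - {i})"
        by simp
      then show ?thesis
        using b that False fin by (auto simp: kbasis_idx_def)
    qed
    have "fscale (koszul_sign ?s ?v) (kgen b s)
        + (\<Sum>i\<in>s. fscale (koszul_sign ?s i) (kbasis b (s - {i}))) = 0"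
    proof -
      have "kbasis b (s - {i}) = kgen b (?s - {i})" if "i \<in> s" for i
      proof -
        have "insert ?v (s - {i}) = ?s - {i}"
          using that False by auto
        then show ?thesis
          by (simp add: kbasis_def)
      qed
      then show ?thesis
        using kgen_relation[of ?s b] v b(2) fin False by (simp add: sum.insert)
    qed
    then have "kgen b s = fscale (koszul_sign ?s ?v) (- (\<Sum>i\<in>s. fscale (koszul_sign ?s i) (kbasis b (s - {i}))))"
      by (simp add: add_eq_0_iff fscale_def fun_eq_iff koszul_sign_square mult.assoc[symmetric])
    also have "\<dots> \<in> forms.span (case_prod kbasis ` kbasis_idx n r k)"
      using in_basis
      by (intro forms.span_scale forms.span_neg forms.span_sum forms.span_base) force
    finally show ?thesis .
  qed
qed

lemma finite_kbasis_idx: "finite (kbasis_idx n r k)"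
proof (rule finite_subset[OF _ finite_weight_le])
  show "kbasis_idx n r k \<subseteq> {(b, t). length b = n \<and> t \<subseteq> nonzeros b \<and> weight b t \<le> r + k}"
  proof clarify
    fix b t
    assume "(b, t) \<in> kbasis_idx n r k"
    moreover have "weight b t \<le> weight b (insert (pivot b) t)"
      by (rule weight_mono) blast
    ultimately show "length b = n \<and> t \<subseteq> nonzeros b \<and> weight b t \<le> r + k"
      by (auto simp: kbasis_idx_def)
  qed
qed

lemma kbasis_idx_imp_kgen_idx:
  assumes "(b, t) \<in> kbasis_idx n r k"
  shows "(b, insert (pivot b) t) \<in> kgen_idx n r k"
proof -
  have t: "length b = n" "t \<subseteq> nonzeros b - {pivot b}" "card t = k" "r + k < sum_list b"
    "weight b (insert (pivot b) t) \<le> r + k"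
    using assms by (auto simp: kbasis_idx_def)
  then have "sum_list b \<noteq> 0"
    by linarith
  then have "pivot b \<in> nonzeros b"
    by (rule pivot_in_nonzeros)
  moreover have "finite t"
    using t(2) finite_if_subset_nonzeros[of t b] by blast
  then have "card (insert (pivot b) t) = Suc k"
    using t(2,3) by (auto simp: card_insert_if)
  ultimately show ?thesis
    using t by (auto simp: kgen_idx_def)
qed

text \<open>Each basis element is the only one containing the monomial \<open>x\<^sup>b\<^sup>-\<^sup>\<one>\<^sup>t dx\<^sub>t\<close>.\<close>

lemma kbasis_mon_eq_iff:
  assumes "(b, t) \<in> kbasis_idx n r k" "(b', t') \<in> kbasis_idx n r k" "i \<in> insert (pivot b') t'"
  shows "(sub_ind b t, t) = (sub_ind b' (insert (pivot b') t' - {i}), insert (pivot b') t' - {i})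
    \<longleftrightarrow> (b, t) = (b', t') \<and> i = pivot b'"
proof
  assume eq: "(sub_ind b t, t) = (sub_ind b' (insert (pivot b') t' - {i}), insert (pivot b') t' - {i})"
  then have t: "t = insert (pivot b') t' - {i}"
    by simp
  have "t \<subseteq> nonzeros b" "t \<subseteq> nonzeros b'"
    using assms(1) kbasis_idx_imp_kgen_idx[OF assms(2)] t by (auto simp: kbasis_idx_def kgen_idx_def)
  moreover have "sub_ind b t = sub_ind b' t"
    using eq t by simp
  ultimately have "b = b'"
    using add_ind_sub_ind by metis
  moreover have "pivot b \<notin> t" "pivot b' \<notin> t'"
    using assms(1,2) by (auto simp: kbasis_idx_def)
  ultimately have "i = pivot b'"
    using t by auto
  then show "(b, t) = (b', t') \<and> i = pivot b'"
    using t \<open>b = b'\<close> \<open>pivot b' \<notin> t'\<close> by auto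
next
  assume "(b, t) = (b', t') \<and> i = pivot b'"
  moreover have "insert (pivot b') t' - {pivot b'} = t'"
    using assms(2) by (auto simp: kbasis_idx_def)
  ultimately show "(sub_ind b t, t) = (sub_ind b' (insert (pivot b') t' - {i}), insert (pivot b') t' - {i})"
    by simp
qed

lemma kbasis_apply_mon:
  assumes "(b, t) \<in> kbasis_idx n r k" "(b', t') \<in> kbasis_idx n r k"
  shows "kbasis b' t' (sub_ind b t, t) =
    (if (b, t) = (b', t') then koszul_sign (insert (pivot b') t') (pivot b') else 0)"
proof -
  let ?s = "insert (pivot b') t'"
  have s: "?s \<subseteq> nonzeros b'"
    using kbasis_idx_imp_kgen_idx[OF assms(2)] by (simp add: kgen_idx_def)
  have "kbasis b' t' (sub_ind b t, t) =
      (\<Sum>i\<in>?s. koszul_sign ?s i * (if (sub_ind b t, t) = (sub_ind b' (?s - {i}), ?s - {i}) then 1 else 0))"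
    by (simp add: kbasis_def kgen_eq_sum[OF s] sum_form_apply fscale_def fmon_def)
  also have "\<dots> = (\<Sum>i\<in>?s. if i = pivot b' then (if (b, t) = (b', t') then koszul_sign ?s i else 0) else 0)"
  proof (rule sum.cong[OF refl])
    fix i assume i: "i \<in> ?s"
    show "koszul_sign ?s i * (if (sub_ind b t, t) = (sub_ind b' (?s - {i}), ?s - {i}) then 1 else 0)
        = (if i = pivot b' then (if (b, t) = (b', t') then koszul_sign ?s i else 0) else 0)"
      unfolding kbasis_mon_eq_iff[OF assms i] by simp
  qed
  also have "\<dots> = (if (b, t) = (b', t') then koszul_sign ?s (pivot b') else 0)"
    using finite_if_subset_nonzeros[OF s] by (simp add: sum.delta)
  finally show ?thesis .
qed

lemma inj_on_kbasis: "inj_on (case_prod kbasis) (kbasis_idx n r k)"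
proof (rule inj_onI, clarify)
  fix b t b' t'
  assume bt: "(b, t) \<in> kbasis_idx n r k" and bt': "(b', t') \<in> kbasis_idx n r k"
    and eq: "kbasis b t = kbasis b' t'"
  have "kbasis b t (sub_ind b t, t) \<noteq> 0"
    using kbasis_apply_mon[OF bt bt] by (simp add: koszul_sign_def)
  then show "b = b' \<and> t = t'"
    using kbasis_apply_mon[OF bt bt'] eq by (auto split: if_splits)
qed

lemma independent_kbasis: "forms.independent (case_prod kbasis ` kbasis_idx n r k)"
proof (rule forms.independent_if_scalars_zero)
  show "finite (case_prod kbasis ` kbasis_idx n r k)"
    using finite_kbasis_idx by simp
  fix c u
  assume zero: "(\<Sum>v\<in>case_prod kbasis ` kbasis_idx n r k. fscale (c v) v) = 0"
    and u: "u \<in> case_prod kbasis ` kbasis_idx n r k"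
  then obtain b t where bt: "(b, t) \<in> kbasis_idx n r k" and u: "u = kbasis b t"
    by auto
  have "0 = (\<Sum>v\<in>case_prod kbasis ` kbasis_idx n r k. fscale (c v) v) (sub_ind b t, t)"
    using zero by simp
  also have "\<dots> = (\<Sum>p\<in>kbasis_idx n r k. c (case_prod kbasis p) * case_prod kbasis p (sub_ind b t, t))"
    by (simp add: sum.reindex[OF inj_on_kbasis] sum_form_apply fscale_def)
  also have "\<dots> = (\<Sum>p\<in>kbasis_idx n r k.
      if p = (b, t) then c u * koszul_sign (insert (pivot b) t) (pivot b) else 0)"
  proof (rule sum.cong[OF refl], clarify)
    fix b' t' assume "(b', t') \<in> kbasis_idx n r k"
    then show "c (kbasis b' t') * kbasis b' t' (sub_ind b t, t) =
        (if (b', t') = (b, t) then c u * koszul_sign (insert (pivot b) t) (pivot b) else 0)"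
      using kbasis_apply_mon[OF bt] u by auto
  qed
  also have "\<dots> = c u * koszul_sign (insert (pivot b) t) (pivot b)"
    using bt finite_kbasis_idx by simp
  finally show "c u = 0"
    by (simp add: koszul_sign_def)
qed

lemma dim_Jspace:
  assumes "1 \<le> r"
  shows "forms.dim (Jspace n r k) = card (kbasis_idx n r k)"
proof -
  have "case_prod kgen ` kgen_idx n r k \<subseteq> forms.span (case_prod kbasis ` kbasis_idx n r k)"
    using kgen_in_span_kbasis[OF assms] by auto
  moreover have "case_prod kbasis ` kbasis_idx n r k \<subseteq> forms.span (case_prod kgen ` kgen_idx n r k)"
    using kbasis_idx_imp_kgen_idx by (force simp: kbasis_def intro: forms.span_base)
  ultimately have "Jspace n r k = forms.span (case_prod kbasis ` kbasis_idx n r k)"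
    unfolding Jspace_eq_span_kgen by (intro forms.span_eq[THEN iffD2]) simp
  then show ?thesis
    using forms.dim_span_eq_card_independent[OF independent_kbasis] card_image[OF inj_on_kbasis]
    by simp
qed

section \<open>Counting the basis\<close>

definition excess_idx :: "nat \<Rightarrow> nat \<Rightarrow> nat \<Rightarrow> (nat list \<times> nat set) set" where
  "excess_idx n r k = {(b, s). length b = n \<and> s \<subseteq> nonzeros b \<and> card s = k \<and>
      r + k < sum_list b \<and> weight b s \<le> r + k}"

lemma kbasis_idx_eq_excess_idx_pivot_notin:
  assumes "1 \<le> r"
  shows "kbasis_idx n r k = {(b, s) \<in> excess_idx n r k. pivot b \<notin> s}"
proof safe
  fix b t
  assume bt: "(b, t) \<in> kbasis_idx n r k"
  then have "r + k < sum_list b"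
    by (simp add: kbasis_idx_def)
  then have "sum_list b \<noteq> 0"
    by linarith
  moreover have "t \<subseteq> nonzeros b" "pivot b \<notin> t"
    using bt by (auto simp: kbasis_idx_def)
  ultimately have "weight b (insert (pivot b) t) \<le> r + card t \<longleftrightarrow> weight b t \<le> r + card t"
    using assms by (rule weight_insert_pivot)
  then show "(b, t) \<in> excess_idx n r k"
    using bt by (auto simp: kbasis_idx_def excess_idx_def)
  show "pivot b \<in> t \<Longrightarrow> False"
    using bt by (auto simp: kbasis_idx_def)
next
  fix b s
  assume bs: "(b, s) \<in> excess_idx n r k" "pivot b \<notin> s"
  then have "r + k < sum_list b"
    by (simp add: excess_idx_def)
  then have "sum_list b \<noteq> 0"
    by linarith
  moreover have "s \<subseteq> nonzeros b"
    using bs by (simp add: excess_idx_def)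
  ultimately have "weight b (insert (pivot b) s) \<le> r + card s \<longleftrightarrow> weight b s \<le> r + card s"
    using bs(2) assms by (rule weight_insert_pivot)
  then show "(b, s) \<in> kbasis_idx n r k"
    using bs by (auto simp: kbasis_idx_def excess_idx_def)
qed

lemma excess_idx_pivot_in_eq_image:
  "{(b, s) \<in> excess_idx n r (Suc k). pivot b \<in> s} =
    (\<lambda>(b, t). (b, insert (pivot b) t)) ` kbasis_idx n (Suc r) k"
proof safe
  fix b s
  assume bs: "(b, s) \<in> excess_idx n r (Suc k)" "pivot b \<in> s"
  then have "(b, s - {pivot b}) \<in> kbasis_idx n (Suc r) k"
    by (auto simp: excess_idx_def kbasis_idx_def insert_absorb finite_if_subset_nonzeros)
  moreover have "s = insert (pivot b) (s - {pivot b})"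
    using bs(2) by blast
  ultimately show "(b, s) \<in> (\<lambda>(b, t). (b, insert (pivot b) t)) ` kbasis_idx n (Suc r) k"
    by force
next
  fix b t
  assume "(b, t) \<in> kbasis_idx n (Suc r) k"
  then show "(b, insert (pivot b) t) \<in> excess_idx n r (Suc k)"
    using kbasis_idx_imp_kgen_idx[of b t n "Suc r" k]
    by (auto simp: excess_idx_def kbasis_idx_def kgen_idx_def)
qed

lemma finite_excess_idx: "finite (excess_idx n r k)"
  by (rule finite_subset[OF _ finite_weight_le[of n "r + k"]]) (auto simp: excess_idx_def)

lemma card_excess_idx:
  assumes "1 \<le> r"
  shows "card (excess_idx n r k) =
    card (kbasis_idx n r k) + (case k of 0 \<Rightarrow> 0 | Suc k' \<Rightarrow> card (kbasis_idx n (Suc r) k'))"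
proof -
  let ?out = "{(b, s) \<in> excess_idx n r k. pivot b \<notin> s}"
  let ?in = "{(b, s) \<in> excess_idx n r k. pivot b \<in> s}"
  have "excess_idx n r k = ?out \<union> ?in"
    by blast
  moreover have "card (?out \<union> ?in) = card ?out + card ?in"
    by (rule card_Un_disjoint) (auto intro: rev_finite_subset[OF finite_excess_idx])
  ultimately have "card (excess_idx n r k) = card (kbasis_idx n r k) + card ?in"
    by (simp add: kbasis_idx_eq_excess_idx_pivot_notin[OF assms])
  moreover have "card ?in = (case k of 0 \<Rightarrow> 0 | Suc k' \<Rightarrow> card (kbasis_idx n (Suc r) k'))"
  proof (cases k)
    case 0
    then have "?in = {}"
      by (auto simp: excess_idx_def finite_if_subset_nonzeros)
    then have "card ?in = 0"
      by (simp only: card.empty)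
    then show ?thesis
      using 0 by simp
  next
    case (Suc k')
    have "inj_on (\<lambda>(b, t). (b, insert (pivot b) t)) (kbasis_idx n (Suc r) k')"
      by (rule inj_onI) (auto simp: kbasis_idx_def insert_ident)
    then show ?thesis
      unfolding Suc excess_idx_pivot_in_eq_image by (simp add: card_image)
  qed
  ultimately show ?thesis
    by simp
qed

definition weight_le_idx :: "nat \<Rightarrow> nat \<Rightarrow> nat \<Rightarrow> (nat list \<times> nat set) set" where
  "weight_le_idx n N k = {(b, s). length b = n \<and> s \<subseteq> nonzeros b \<and> card s = k \<and> weight b s \<le> N}"

definition degree_le_idx :: "nat \<Rightarrow> nat \<Rightarrow> nat \<Rightarrow> (nat list \<times> nat set) set" where
  "degree_le_idx n N k = {(b, s). length b = n \<and> s \<subseteq> nonzeros b \<and> card s = k \<and> sum_list b \<le> N}"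

lemma finite_weight_le_idx: "finite (weight_le_idx n N k)"
  by (rule finite_subset[OF _ finite_weight_le[of n N]]) (auto simp: weight_le_idx_def)

lemma degree_le_idx_subset_weight_le_idx: "degree_le_idx n N k \<subseteq> weight_le_idx n N k"
  using sum_list_eq_weight_plus_ldeg by (fastforce simp: degree_le_idx_def weight_le_idx_def)

lemma card_excess_idx_eq_diff:
  "card (excess_idx n r k) = card (weight_le_idx n (r + k) k) - card (degree_le_idx n (r + k) k)"
proof -
  have "excess_idx n r k = weight_le_idx n (r + k) k - degree_le_idx n (r + k) k"
    by (auto simp: excess_idx_def weight_le_idx_def degree_le_idx_def)
  then show ?thesis
    by (simp add: card_Diff_subset degree_le_idx_subset_weight_le_idx
        rev_finite_subset[OF finite_weight_le_idx degree_le_idx_subset_weight_le_idx])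
qed

lemma card_lists_sum_le:
  "card {a :: nat list. length a = n \<and> sum_list a \<le> N} = (\<Sum>j = 0..N. (n + j - 1) choose j)"
proof -
  have fin: "finite {a :: nat list. length a = n \<and> sum_list a = j}" for j
    by (rule finite_subset[of _ "{a. set a \<subseteq> {..j} \<and> length a = n}"])
      (auto intro: finite_lists_length_eq dest: member_le_sum_list)
  have "{a :: nat list. length a = n \<and> sum_list a \<le> N} = (\<Union>j\<in>{0..N}. {a. length a = n \<and> sum_list a = j})"
    by auto
  also have "card \<dots> = (\<Sum>j = 0..N. card {a :: nat list. length a = n \<and> sum_list a = j})"
    by (rule card_UN_disjoint) (auto simp: fin)
  finally show ?thesis
    by (simp add: card_length_sum_list add.commute)
qed

lemma card_degree_le_idx: "card (degree_le_idx n (r + k) k) = Bterm n r k 0"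
proof -
  let ?X = "{a :: nat list. length a = n \<and> sum_list a \<le> r} \<times> {s. s \<subseteq> {..<n} \<and> card s = k}"
  let ?f = "\<lambda>(a, s). (add_ind a s, s)"
  have "inj_on ?f ?X"
    by (rule inj_onI) (auto, metis sub_ind_add_ind)
  moreover have "?f ` ?X = degree_le_idx n (r + k) k"
  proof
    show "?f ` ?X \<subseteq> degree_le_idx n (r + k) k"
    proof (rule image_subsetI)
      fix p
      assume "p \<in> ?X"
      then obtain a s where p: "p = (a, s)" and a: "length a = n" "sum_list a \<le> r" "s \<subseteq> {..<n}" "card s = k"
        by auto
      then have s: "s \<subseteq> nonzeros (add_ind a s)"
        by (simp add: subset_nonzeros_add_ind)
      then show "?f p \<in> degree_le_idx n (r + k) k"
        using sum_list_sub_ind[OF s] a p by (simp add: sub_ind_add_ind degree_le_idx_def)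
    qed
  next
    show "degree_le_idx n (r + k) k \<subseteq> ?f ` ?X"
    proof clarify
    fix b s
    assume bs: "(b, s) \<in> degree_le_idx n (r + k) k"
    then have "(sub_ind b s, s) \<in> ?X"
      using sum_list_sub_ind[of s b] nonzeros_subset[of b] by (auto simp: degree_le_idx_def)
    moreover have "(b, s) = ?f (sub_ind b s, s)"
      using bs by (simp add: degree_le_idx_def add_ind_sub_ind)
    ultimately show "(b, s) \<in> ?f ` ?X"
      by blast
    qed
  qed
  ultimately have "card (degree_le_idx n (r + k) k) = card ?X"
    using card_image by fastforce
  also have "\<dots> = (\<Sum>j = 0..r. (n + j - 1) choose j) * (n choose k)"
    by (simp add: card_cartesian_product card_lists_sum_le n_subsets)
  finally show ?thesis
    by (simp add: Bterm_def sum_distrib_right)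
qed

section \<open>Counting pairs of bounded weight\<close>

text \<open>A pair \<open>(b, s)\<close> is the same as a list of marked entries \<open>(b\<^sub>i, i \<in> s)\<close>; this makes the
count recursive in \<open>n\<close>.\<close>

definition admissible :: "(nat \<times> bool) list \<Rightarrow> bool" where
  "admissible xs \<longleftrightarrow> (\<forall>(e, m) \<in> set xs. m \<longrightarrow> e \<noteq> 0)"

definition marks :: "(nat \<times> bool) list \<Rightarrow> nat" where
  "marks xs = length (filter snd xs)"

definition list_weight :: "(nat \<times> bool) list \<Rightarrow> nat" where
  "list_weight xs = (\<Sum>(e, m) \<leftarrow> xs. entry_weight e m)"

definition marked_weight_le :: "nat \<Rightarrow> nat \<Rightarrow> nat \<Rightarrow> (nat \<times> bool) list set" where
  "marked_weight_le n N k = {xs. length xs = n \<and> admissible xs \<and> marks xs = k \<and> list_weight xs \<le> N}"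

definition marked_weight_eq :: "nat \<Rightarrow> nat \<Rightarrow> nat \<Rightarrow> (nat \<times> bool) list set" where
  "marked_weight_eq n M k = {xs. length xs = n \<and> admissible xs \<and> marks xs = k \<and> list_weight xs = M}"

definition unzip_marks :: "(nat \<times> bool) list \<Rightarrow> nat list \<times> nat set" where
  "unzip_marks xs = (map fst xs, {i. i < length xs \<and> snd (xs ! i)})"

lemma admissible_simps [simp]:
  "admissible []"
  "admissible ((e, m) # xs) \<longleftrightarrow> (m \<longrightarrow> e \<noteq> 0) \<and> admissible xs"
  by (auto simp: admissible_def)

lemma marks_simps [simp]:
  "marks [] = 0"
  "marks ((e, m) # xs) = of_bool m + marks xs"
  by (simp_all add: marks_def)

lemma list_weight_simps [simp]:
  "list_weight [] = 0"
  "list_weight ((e, m) # xs) = entry_weight e m + list_weight xs"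
  by (simp_all add: list_weight_def)

lemma inj_unzip_marks: "inj unzip_marks"
proof (rule injI)
  fix xs ys
  assume eq: "unzip_marks xs = unzip_marks ys"
  then have fst_eq: "map fst xs = map fst ys"
    by (simp add: unzip_marks_def)
  then have len: "length xs = length ys"
    by (rule map_eq_imp_length_eq)
  show "xs = ys"
  proof (rule nth_equalityI[OF len])
    fix i
    assume i: "i < length xs"
    have "fst (xs ! i) = fst (ys ! i)"
      using fst_eq i len by (metis nth_map)
    moreover have "i \<in> {i. i < length xs \<and> snd (xs ! i)} \<longleftrightarrow> i \<in> {i. i < length ys \<and> snd (ys ! i)}"
      using eq by (simp add: unzip_marks_def)
    then have "snd (xs ! i) = snd (ys ! i)"
      using i len by simp
    ultimately show "xs ! i = ys ! i"
      by (rule prod_eqI)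
  qed
qed

lemma unzip_marks_props:
  assumes "admissible xs"
  shows "length (fst (unzip_marks xs)) = length xs"
    and "snd (unzip_marks xs) \<subseteq> nonzeros (fst (unzip_marks xs))"
    and "card (snd (unzip_marks xs)) = marks xs"
    and "weight (fst (unzip_marks xs)) (snd (unzip_marks xs)) = list_weight xs"
proof -
  show "length (fst (unzip_marks xs)) = length xs"
    by (simp add: unzip_marks_def)
  show "snd (unzip_marks xs) \<subseteq> nonzeros (fst (unzip_marks xs))"
    using assms nth_mem by (fastforce simp: unzip_marks_def nonzeros_def admissible_def)
  show "card (snd (unzip_marks xs)) = marks xs"
    by (simp add: unzip_marks_def marks_def length_filter_conv_card)
  have "weight (fst (unzip_marks xs)) (snd (unzip_marks xs)) = (\<Sum>i<length xs. case_prod entry_weight (xs ! i))"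
    unfolding weight_def unzip_marks_def by (intro sum.cong) (auto simp: case_prod_beta)
  also have "\<dots> = list_weight xs"
    by (simp add: list_weight_def sum_list_sum_nth atLeast0LessThan)
  finally show "weight (fst (unzip_marks xs)) (snd (unzip_marks xs)) = list_weight xs" .
qed

lemma weight_le_idx_eq_image: "weight_le_idx n N k = unzip_marks ` marked_weight_le n N k"
proof
  show "weight_le_idx n N k \<subseteq> unzip_marks ` marked_weight_le n N k"
  proof clarify
    fix b s
    assume bs: "(b, s) \<in> weight_le_idx n N k"
    define xs where "xs = map (\<lambda>i. (b ! i, i \<in> s)) [0..<length b]"
    have s: "s \<subseteq> {..<length b}"
      using bs nonzeros_subset by (auto simp: weight_le_idx_def)
    have xs: "unzip_marks xs = (b, s)"
      using s by (auto simp: unzip_marks_def xs_def intro: nth_equalityI)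
    have "admissible xs"
      using bs by (auto simp: admissible_def xs_def weight_le_idx_def nonzeros_def)
    then have "xs \<in> marked_weight_le n N k"
      using unzip_marks_props[of xs] bs by (simp add: xs marked_weight_le_def weight_le_idx_def)
    then show "(b, s) \<in> unzip_marks ` marked_weight_le n N k"
      using xs by force
  qed
  show "unzip_marks ` marked_weight_le n N k \<subseteq> weight_le_idx n N k"
    using unzip_marks_props
    by (force simp: marked_weight_le_def weight_le_idx_def case_prod_beta)
qed

lemma card_weight_le_idx_eq_marked: "card (weight_le_idx n N k) = card (marked_weight_le n N k)"
  by (simp add: weight_le_idx_eq_image card_image inj_on_subset[OF inj_unzip_marks])

lemma finite_marked_weight_le: "finite (marked_weight_le n N k)"
  using finite_weight_le_idx[of n N k] inj_on_subset[OF inj_unzip_marks]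
  by (simp add: weight_le_idx_eq_image finite_image_iff)

lemma finite_marked_weight_eq: "finite (marked_weight_eq n M k)"
  by (rule finite_subset[OF _ finite_marked_weight_le[of n M k]])
    (auto simp: marked_weight_eq_def marked_weight_le_def)

lemma marked_weight_eq_Suc:
  "marked_weight_eq (Suc n) M k =
     Cons (0, False) ` marked_weight_eq n M k \<union> Cons (1, False) ` marked_weight_eq n M k
     \<union> (\<lambda>ys. (M - list_weight ys, True) # ys) ` {ys \<in> marked_weight_le n (M - 1) (k - 1). 1 \<le> M \<and> 1 \<le> k}
     \<union> (\<lambda>ys. (M - list_weight ys, False) # ys) ` {ys \<in> marked_weight_le n (M - 2) k. 2 \<le> M}"
  (is "_ = ?A0 \<union> ?A1 \<union> ?B1 \<union> ?B2")
proof
  show "marked_weight_eq (Suc n) M k \<subseteq> ?A0 \<union> ?A1 \<union> ?B1 \<union> ?B2"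
  proof
    fix xs
    assume xs: "xs \<in> marked_weight_eq (Suc n) M k"
    then obtain e m ys where xs_eq: "xs = (e, m) # ys"
      by (cases xs) (auto simp: marked_weight_eq_def)
    have ys: "length ys = n" "m \<longrightarrow> e \<noteq> 0" "admissible ys" "of_bool m + marks ys = k"
      "entry_weight e m + list_weight ys = M"
      using xs xs_eq by (auto simp: marked_weight_eq_def)
    consider "m" | "\<not> m" "2 \<le> e" | "\<not> m" "e = 0 \<or> e = 1"
      by linarith
    then show "xs \<in> ?A0 \<union> ?A1 \<union> ?B1 \<union> ?B2"
    proof cases
      case 1
      then have "entry_weight e m = e"
        using ys(2) by (simp add: entry_weight_def)
      then have "ys \<in> marked_weight_le n (M - 1) (k - 1) \<and> 1 \<le> M \<and> 1 \<le> k" "e = M - list_weight ys"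
        using ys 1 by (auto simp: marked_weight_le_def)
      then show ?thesis
        using xs_eq 1 by blast
    next
      case 2
      then have "entry_weight e m = e"
        by (simp add: entry_weight_def)
      then have "ys \<in> marked_weight_le n (M - 2) k \<and> 2 \<le> M" "e = M - list_weight ys"
        using ys 2 by (auto simp: marked_weight_le_def)
      then show ?thesis
        using xs_eq 2 by blast
    next
      case 3
      then have "ys \<in> marked_weight_eq n M k"
        using ys by (auto simp: marked_weight_eq_def entry_weight_def)
      then show ?thesis
        using xs_eq 3 by blast
    qed
  qed
  have "entry_weight (M - list_weight ys) m = M - list_weight ys"
    if "ys \<in> marked_weight_le n (M - j) k'" "j \<le> M" "1 \<le> j" "m \<or> 2 \<le> j" for ys m j k'
    using that by (auto simp: entry_weight_def marked_weight_le_def)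
  then show "?A0 \<union> ?A1 \<union> ?B1 \<union> ?B2 \<subseteq> marked_weight_eq (Suc n) M k"
    by (fastforce simp: marked_weight_eq_def marked_weight_le_def entry_weight_def)
qed

lemma card_marked_weight_eq_Suc:
  "card (marked_weight_eq (Suc n) M k) = 2 * card (marked_weight_eq n M k)
     + (if 1 \<le> M \<and> 1 \<le> k then card (marked_weight_le n (M - 1) (k - 1)) else 0)
     + (if 2 \<le> M then card (marked_weight_le n (M - 2) k) else 0)"
proof -
  let ?A0 = "Cons (0, False) ` marked_weight_eq n M k"
    and ?A1 = "Cons (1, False) ` marked_weight_eq n M k"
    and ?B1 = "(\<lambda>ys. (M - list_weight ys, True) # ys) ` {ys \<in> marked_weight_le n (M - 1) (k - 1). 1 \<le> M \<and> 1 \<le> k}"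
    and ?B2 = "(\<lambda>ys. (M - list_weight ys, False) # ys) ` {ys \<in> marked_weight_le n (M - 2) k. 2 \<le> M}"
  have fin: "finite ?A0" "finite ?A1" "finite ?B1" "finite ?B2"
    using finite_marked_weight_eq finite_marked_weight_le by auto
  have "card (?A0 \<union> ?A1 \<union> ?B1 \<union> ?B2) = card ?A0 + card ?A1 + card ?B1 + card ?B2"
  proof -
    have "?B2 \<inter> (?A0 \<union> ?A1 \<union> ?B1) = {}"
      by (force simp: marked_weight_le_def)
    moreover have "?B1 \<inter> (?A0 \<union> ?A1) = {}" "?A0 \<inter> ?A1 = {}"
      by auto
    ultimately show ?thesis
      using fin by (simp add: card_Un_disjoint Int_commute)
  qed
  moreover have "card ?A0 = card (marked_weight_eq n M k)" "card ?A1 = card (marked_weight_eq n M k)"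
    by (simp_all add: card_image)
  moreover have "card ?B1 = (if 1 \<le> M \<and> 1 \<le> k then card (marked_weight_le n (M - 1) (k - 1)) else 0)"
    by (cases "1 \<le> M \<and> 1 \<le> k") (auto simp: card_image inj_on_def)
  moreover have "card ?B2 = (if 2 \<le> M then card (marked_weight_le n (M - 2) k) else 0)"
    by (cases "2 \<le> M") (simp_all add: card_image inj_on_def)
  ultimately show ?thesis
    unfolding marked_weight_eq_Suc by simp
qed

lemma marked_weight_le_0: "marked_weight_le n 0 k = marked_weight_eq n 0 k"
  by (simp add: marked_weight_le_def marked_weight_eq_def)

lemma card_marked_weight_le_Suc:
  "card (marked_weight_le n (Suc N) k) = card (marked_weight_le n N k) + card (marked_weight_eq n (Suc N) k)"
proof -
  have "marked_weight_le n (Suc N) k = marked_weight_le n N k \<union> marked_weight_eq n (Suc N) k"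
    by (auto simp: marked_weight_le_def marked_weight_eq_def)
  moreover have "card (marked_weight_le n N k \<union> marked_weight_eq n (Suc N) k) =
      card (marked_weight_le n N k) + card (marked_weight_eq n (Suc N) k)"
    by (rule card_Un_disjoint[OF finite_marked_weight_le finite_marked_weight_eq])
      (auto simp: marked_weight_le_def marked_weight_eq_def)
  ultimately show ?thesis
    by simp
qed

lemma card_marked_weight_le_Nil: "card (marked_weight_le 0 N k) = of_bool (k = 0)"
proof -
  have "marked_weight_le 0 N k = (if k = 0 then {[]} else {})"
    by (auto simp: marked_weight_le_def)
  then show ?thesis
    by simp
qed

definition phi_term :: "nat \<Rightarrow> nat \<Rightarrow> nat \<Rightarrow> nat \<Rightarrow> nat" where
  "phi_term n N k d = 2 ^ (n - d) * (n choose d) * (d choose k) * ((N + k - d) choose d)"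

definition Phi :: "nat \<Rightarrow> nat \<Rightarrow> nat \<Rightarrow> nat" where
  "Phi n N k = (\<Sum>d\<le>n. phi_term n N k d)"

text \<open>Pascal's rule on \<open>n choose d\<close> splits \<open>Phi (n + 1)\<close> into \<open>2 * Phi n\<close> and the following sum.\<close>

definition Psi :: "nat \<Rightarrow> nat \<Rightarrow> nat \<Rightarrow> nat" where
  "Psi n N k = (\<Sum>e\<le>n. 2 ^ (n - e) * (n choose e) * (Suc e choose k) * ((N + k - Suc e) choose Suc e))"

lemma Phi_Suc: "Phi (Suc n) N k = 2 * Phi n N k + Psi n N k"
proof -
  define G where "G d = (N + k - d) choose d" for d
  define U where "U e = 2 ^ (n - e) * (n choose Suc e) * (Suc e choose k) * G (Suc e)" for e
  define V where "V e = 2 ^ (n - e) * (n choose e) * (Suc e choose k) * G (Suc e)" for e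
  have "Phi (Suc n) N k = phi_term (Suc n) N k 0 + (\<Sum>e\<le>n. phi_term (Suc n) N k (Suc e))"
    unfolding Phi_def by (rule sum.atMost_Suc_shift)
  also have "\<dots> = 2 * phi_term n N k 0 + (\<Sum>e<n. U e) + (\<Sum>e\<le>n. V e)"
  proof -
    have "phi_term (Suc n) N k (Suc e) = V e + U e" for e
      by (simp add: phi_term_def U_def V_def G_def algebra_simps)
    moreover have "(\<Sum>e\<le>n. U e) = (\<Sum>e<n. U e)"
      by (simp add: lessThan_Suc_atMost[symmetric] U_def)
    ultimately show ?thesis
      by (simp add: phi_term_def sum.distrib)
  qed
  also have "(\<Sum>e<n. U e) = (\<Sum>e<n. 2 * phi_term n N k (Suc e))"
  proof (rule sum.cong[OF refl])
    fix e
    assume "e \<in> {..<n}"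
    then have "(2::nat) ^ (n - e) = 2 * 2 ^ (n - Suc e)"
      by (simp add: Suc_diff_Suc[symmetric])
    then show "U e = 2 * phi_term n N k (Suc e)"
      by (simp add: U_def phi_term_def G_def)
  qed
  also have "(\<Sum>e\<le>n. V e) = Psi n N k"
    by (simp add: V_def Psi_def G_def)
  also have "2 * phi_term n N k 0 + (\<Sum>e<n. 2 * phi_term n N k (Suc e)) = 2 * Phi n N k"
    unfolding Phi_def by (simp add: sum.atMost_shift sum_distrib_left)
  finally show ?thesis .
qed

lemma Suc_choose_mult_choose:
  assumes "e < N + k"
  shows "(Suc e choose k) * ((N + k - Suc e) choose e) =
    (if 1 \<le> k then (e choose (k - 1)) * ((N + (k - 1) - e) choose e) else 0)
    + (if 1 \<le> N then (e choose k) * ((N - 1 + k - e) choose e) else 0)"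
proof (cases k)
  case 0
  then show ?thesis
    using assms by (simp add: Suc_diff_Suc)
next
  case (Suc k')
  have "N + (k - 1) - e = N + k - Suc e" "(Suc e choose k) = (e choose k') + (e choose k)"
    using assms Suc by simp_all
  moreover have "(e choose k) = 0" if "N = 0"
    using assms that by simp
  ultimately show ?thesis
    using Suc assms by (cases "N = 0") (auto simp: algebra_simps)
qed

lemma Psi_summand_Suc:
  "(Suc e choose k) * ((Suc N + k - Suc e) choose Suc e) =
   (Suc e choose k) * ((N + k - Suc e) choose Suc e)
   + (if 1 \<le> k then (e choose (k - 1)) * ((N + (k - 1) - e) choose e) else 0)
   + (if 1 \<le> N then (e choose k) * ((N - 1 + k - e) choose e) else 0)"
proof (cases "e < N + k")
  case True
  then have "Suc N + k - Suc e = Suc (N + k - Suc e)"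
    by simp
  then show ?thesis
    using Suc_choose_mult_choose[OF True] by (simp add: algebra_simps)
next
  case False
  then show ?thesis
    by auto
qed

lemma sum_if_Phi:
  "(\<Sum>e\<le>n. if P then 2 ^ (n - e) * (n choose e) * ((e choose k) * ((N + k - e) choose e)) else 0) =
    (if P then Phi n N k else 0)"
  by (simp add: Phi_def phi_term_def mult.assoc)

lemma Psi_rec:
  "Psi n (Suc N) k = Psi n N k + (if 1 \<le> k then Phi n N (k - 1) else 0)
    + (if 1 \<le> N then Phi n (N - 1) k else 0)"
proof -
  define c where "c e = 2 ^ (n - e) * (n choose e)" for e
  have "Psi n (Suc N) k = (\<Sum>e\<le>n. c e * ((Suc e choose k) * ((Suc N + k - Suc e) choose Suc e)))"
    unfolding Psi_def c_def by (simp add: algebra_simps)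
  also have "\<dots> = (\<Sum>e\<le>n. c e * ((Suc e choose k) * ((N + k - Suc e) choose Suc e)))
      + (\<Sum>e\<le>n. if 1 \<le> k then c e * ((e choose (k - 1)) * ((N + (k - 1) - e) choose e)) else 0)
      + (\<Sum>e\<le>n. if 1 \<le> N then c e * ((e choose k) * ((N - 1 + k - e) choose e)) else 0)"
    unfolding sum.distrib[symmetric]
    by (intro sum.cong refl) (simp only: Psi_summand_Suc distrib_left if_distrib[of "\<lambda>x. c _ * x"] mult_0_right)
  also have "\<dots> = Psi n N k + (if 1 \<le> k then Phi n N (k - 1) else 0)
      + (if 1 \<le> N then Phi n (N - 1) k else 0)"
    unfolding c_def sum_if_Phi by (simp add: Psi_def mult.assoc)
  finally show ?thesis .
qed

lemma Psi_0: "Psi n 0 k = 0"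
proof -
  have "(Suc e choose k) * ((k - Suc e) choose Suc e) = 0" for e
    by (cases "k \<le> Suc e") simp_all
  then show ?thesis
    by (simp add: Psi_def mult.assoc)
qed

lemma Phi_Nil: "Phi 0 N k = of_bool (k = 0)"
  by (simp add: Phi_def phi_term_def)

lemma Aterm_Phi: "Aterm n r k 0 = Phi n (r + k) k"
proof -
  have "Aterm n r k 0 = (\<Sum>d = k..min n (r div 2 + k). phi_term n (r + k) k d)"
    by (simp add: Aterm_def phi_term_def mult_2 mult_2_right ac_simps)
  also have "\<dots> = (\<Sum>d\<le>n. phi_term n (r + k) k d)"
  proof (rule sum.mono_neutral_left)
    show "\<forall>d\<in>{..n} - {k..min n (r div 2 + k)}. phi_term n (r + k) k d = 0"
    proof
      fix d
      assume d: "d \<in> {..n} - {k..min n (r div 2 + k)}"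
      show "phi_term n (r + k) k d = 0"
      proof (cases "d < k")
        case False
        then have "r + k + k - d < d"
          using d by auto
        then show ?thesis
          by (simp add: phi_term_def)
      qed (simp add: phi_term_def)
    qed
  qed auto
  finally show ?thesis
    by (simp add: Phi_def)
qed

lemma card_marked_weight_le_eq_Phi: "card (marked_weight_le n N k) = Phi n N k"
proof (induction n arbitrary: N k)
  case 0
  then show ?case
    by (simp add: card_marked_weight_le_Nil Phi_Nil)
next
  case (Suc n)
  note IH_n = Suc.IH
  have eq_0: "card (marked_weight_eq n 0 k) = Phi n 0 k" for k
    using Suc.IH[of 0 k] by (simp add: marked_weight_le_0)
  have eq_Suc: "card (marked_weight_eq n (Suc M) k) = Phi n (Suc M) k - Phi n M k" for M k
    using Suc.IH[of "Suc M" k] Suc.IH[of M k] card_marked_weight_le_Suc[of n M k] by simp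
  have Phi_mono: "Phi n M k \<le> Phi n (Suc M) k" for M k
    using Suc.IH[of "Suc M" k] Suc.IH[of M k] card_marked_weight_le_Suc[of n M k] by simp
  show ?case
  proof (induction N arbitrary: k)
    case 0
    then show ?case
      by (simp add: marked_weight_le_0 card_marked_weight_eq_Suc eq_0 Phi_Suc Psi_0)
  next
    case (Suc N)
    have "card (marked_weight_le (Suc n) (Suc N) k) =
        Phi (Suc n) N k + 2 * card (marked_weight_eq n (Suc N) k)
        + (if 1 \<le> k then Phi n N (k - 1) else 0) + (if 1 \<le> N then Phi n (N - 1) k else 0)"
      using Suc.IH by (simp add: card_marked_weight_le_Suc card_marked_weight_eq_Suc Suc_le_eq IH_n)
    also have "\<dots> = Phi (Suc n) (Suc N) k"
      using Phi_mono[of N k] by (simp add: eq_Suc Phi_Suc Psi_rec)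
    finally show ?case .
  qed
qed

lemma card_weight_le_idx_eq_Phi: "card (weight_le_idx n N k) = Phi n N k"
  by (simp add: card_weight_le_idx_eq_marked card_marked_weight_le_eq_Phi)

lemma card_excess_idx_eq_Aterm_Bterm:
  "int (card (excess_idx n r k)) = int (Aterm n r k 0) - int (Bterm n r k 0)"
proof -
  have "card (degree_le_idx n (r + k) k) \<le> card (weight_le_idx n (r + k) k)"
    by (rule card_mono[OF finite_weight_le_idx degree_le_idx_subset_weight_le_idx])
  then show ?thesis
    by (simp add: card_excess_idx_eq_diff card_weight_le_idx_eq_Phi card_degree_le_idx Aterm_Phi of_nat_diff)
qed

lemma Aterm_Suc_Suc: "Aterm n r (Suc k) (Suc i) = Aterm n (Suc r) k i"
  by (simp add: Aterm_def)

lemma Bterm_Suc_Suc: "Bterm n r (Suc k) (Suc i) = Bterm n (Suc r) k i"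
  by (simp add: Bterm_def)

lemma alternating_sum_Suc:
  "(\<Sum>i = 0..Suc k. (-1) ^ i * (int (Aterm n r (Suc k) i) - int (Bterm n r (Suc k) i))) =
    int (Aterm n r (Suc k) 0) - int (Bterm n r (Suc k) 0)
    - (\<Sum>i = 0..k. (-1) ^ i * (int (Aterm n (Suc r) k i) - int (Bterm n (Suc r) k i)))"
proof -
  have "(\<Sum>i = 0..k. (-1) ^ Suc i * (int (Aterm n r (Suc k) (Suc i)) - int (Bterm n r (Suc k) (Suc i))))
      = - (\<Sum>i = 0..k. (-1) ^ i * (int (Aterm n (Suc r) k i) - int (Bterm n (Suc r) k i)))"
    by (simp add: Aterm_Suc_Suc Bterm_Suc_Suc sum_negf)
  then show ?thesis
    by (simp only: sum.atLeast0_atMost_Suc_shift) simp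
qed

lemma card_kbasis_idx:
  assumes "1 \<le> r"
  shows "int (card (kbasis_idx n r k)) = (\<Sum>i = 0..k. (-1) ^ i * (int (Aterm n r k i) - int (Bterm n r k i)))"
  using assms
proof (induction k arbitrary: r)
  case 0
  then show ?case
    using card_excess_idx[OF 0, of n 0] card_excess_idx_eq_Aterm_Bterm[of n r 0] by simp
next
  case (Suc k)
  have "int (card (kbasis_idx n r (Suc k))) + int (card (kbasis_idx n (Suc r) k)) =
      int (Aterm n r (Suc k) 0) - int (Bterm n r (Suc k) 0)"
    using card_excess_idx[OF Suc.prems, of n "Suc k"] card_excess_idx_eq_Aterm_Bterm[of n r "Suc k"]
    by simp
  moreover have "int (card (kbasis_idx n (Suc r) k)) =
      (\<Sum>i = 0..k. (-1) ^ i * (int (Aterm n (Suc r) k i) - int (Bterm n (Suc r) k i)))"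
    by (rule Suc.IH) simp
  ultimately show ?case
    unfolding alternating_sum_Suc by linarith
qed

theorem mainTheorem6:
  fixes n r k :: nat
  assumes "n \<ge> 1" and "r \<ge> 1" and "k \<le> n"
  shows "int (vector_space.dim fscale (Jspace n r k)) =
    (\<Sum>i = 0..k. (-1) ^ i * (int (Aterm n r k i) - int (Bterm n r k i)))"
  using dim_Jspace[OF assms(2)] card_kbasis_idx[OF assms(2)] by simp

end
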